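(* Let $m,n\ge1$. For every instance $(Q,c,d)$ of BQAP1, $$\min_{a\in N,\,b\in M} f_1(x^a,y^b)\le \mathcal{A}_1(Q,c,d)\le \max_{a\in N,\,b\in M} f_1(x^a,y^b),$$ and for every instance $(Q',c',d')$ of BQAP2, $$\min_{a\in M,\,b\in N} f_2(x^a,y^b)\le \mathcal{A}_2(Q',c',d')\le \max_{a\in M,\,b\in N} f_2(x^a,y^b),$$ where (in both cases, with the appropriate dimensions) $x^a$ is the 0-1 matrix with $x^a_{ij}=1$ iff $j=a$, and $y^b$ is the 0-1 matrix with $y^b_{ij}=1$ iff $i=b$.
   Context: $M=\{1,\dots,m\}$, $N=\{1,\dots,n\}$. BQAP1: data $Q=(q_{ijk\ell})$ ($m\times n\times m\times n$ real array), real $m\times n$ matrices $c,d$; feasible solutions are pairs $(x,y)$ of $m\times n$ 0-1 matrices with $\sum_{j=1}^n x_{ij}=1$ for all $i\in M$ and $\sum_{i=1}^m y_{ij}=1$ for all $j\in N$; objective $f_1(x,y)=\sum_{i,k\in M}\sum_{j,\ell\in N} q_{ijk\ell}x_{ij}y_{k\ell}+\sum_{i\in M,j\in N}c_{ij}x_{ij}+\sum_{i\in M,j\in N}d_{ij}y_{ij}$. For BQAP1, $x^a,y^b$ are $m\times n$ matrices with $a\in N$, $b\in M$. BQAP2: data $Q$ ($m\times m\times n\times n$ real array), real $m\times m$ matrix $c$, real $n\times n$ matrix $d$; feasible solutions are pairs $(x,y)$ with $x$ an $m\times m$ 0-1 matrix with $\sum_{j=1}^m x_{ij}=1$ for all $i\in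 M$ and $y$ an $n\times n$ 0-1 matrix with $\sum_{i=1}^n y_{ij}=1$ for all $j\in N$; objective $f_2(x,y)=\sum_{i,j\in M}\sum_{k,\ell\in N} q_{ijk\ell}x_{ij}y_{k\ell}+\sum_{i,j\in M}c_{ij}x_{ij}+\sum_{i,j\in N}d_{ij}y_{ij}$. For BQAP2, $x^a$ is $m\times m$ with $a\in M$ and $y^b$ is $n\times n$ with $b\in N$. $\mathcal{A}_1$ (resp. $\mathcal{A}_2$) denotes the arithmetic mean of $f_1$ (resp. $f_2$) over all feasible solutions of BQAP1 (resp. BQAP2). *)

theory Defs
  imports Main Complex_Main
begin

(* Matrices are functions nat => nat => real, indexed from 1; a p x q matrix is
   required to vanish outside {1..p} x {1..q} so that the feasible sets are finite. *)

definition zero_one_mat :: "nat \<Rightarrow> nat \<Rightarrow> (nat \<Rightarrow> nat \<Rightarrow> real) \<Rightarrow> bool" where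
  "zero_one_mat p q x \<longleftrightarrow> (\<forall>i j. x i j \<in> {0, 1}) \<and>
     (\<forall>i j. \<not> (i \<in> {1..p} \<and> j \<in> {1..q}) \<longrightarrow> x i j = 0)"

definition row_assign :: "nat \<Rightarrow> nat \<Rightarrow> (nat \<Rightarrow> nat \<Rightarrow> real) set" where
  "row_assign p q = {x. zero_one_mat p q x \<and> (\<forall>i\<in>{1..p}. (\<Sum>j=1..q. x i j) = 1)}"

definition col_assign :: "nat \<Rightarrow> nat \<Rightarrow> (nat \<Rightarrow> nat \<Rightarrow> real) set" where
  "col_assign p q = {y. zero_one_mat p q y \<and> (\<forall>j\<in>{1..q}. (\<Sum>i=1..p. y i j) = 1)}"

definition xmat :: "nat \<Rightarrow> nat \<Rightarrow> nat \<Rightarrow> nat \<Rightarrow> nat \<Rightarrow> real" where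
  "xmat p q a = (\<lambda>i j. if i \<in> {1..p} \<and> j \<in> {1..q} \<and> j = a then 1 else 0)"

definition ymat :: "nat \<Rightarrow> nat \<Rightarrow> nat \<Rightarrow> nat \<Rightarrow> nat \<Rightarrow> real" where
  "ymat p q b = (\<lambda>i j. if i \<in> {1..p} \<and> j \<in> {1..q} \<and> i = b then 1 else 0)"

definition feas1 :: "nat \<Rightarrow> nat \<Rightarrow> ((nat \<Rightarrow> nat \<Rightarrow> real) \<times> (nat \<Rightarrow> nat \<Rightarrow> real)) set" where
  "feas1 m n = row_assign m n \<times> col_assign m n"

definition f1 :: "nat \<Rightarrow> nat \<Rightarrow> (nat \<Rightarrow> nat \<Rightarrow> nat \<Rightarrow> nat \<Rightarrow> real) \<Rightarrow>
    (nat \<Rightarrow> nat \<Rightarrow> real) \<Rightarrow> (nat \<Rightarrow> nat \<Rightarrow> real) \<Rightarrow>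
    (nat \<Rightarrow> nat \<Rightarrow> real) \<Rightarrow> (nat \<Rightarrow> nat \<Rightarrow> real) \<Rightarrow> real" where
  "f1 m n Q c d x y =
     (\<Sum>i=1..m. \<Sum>j=1..n. \<Sum>k=1..m. \<Sum>l=1..n. Q i j k l * x i j * y k l)
     + (\<Sum>i=1..m. \<Sum>j=1..n. c i j * x i j)
     + (\<Sum>i=1..m. \<Sum>j=1..n. d i j * y i j)"

definition A1 :: "nat \<Rightarrow> nat \<Rightarrow> (nat \<Rightarrow> nat \<Rightarrow> nat \<Rightarrow> nat \<Rightarrow> real) \<Rightarrow>
    (nat \<Rightarrow> nat \<Rightarrow> real) \<Rightarrow> (nat \<Rightarrow> nat \<Rightarrow> real) \<Rightarrow> real" where
  "A1 m n Q c d = (\<Sum>(x, y)\<in>feas1 m n. f1 m n Q c d x y) / real (card (feas1 m n))"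

definition feas2 :: "nat \<Rightarrow> nat \<Rightarrow> ((nat \<Rightarrow> nat \<Rightarrow> real) \<times> (nat \<Rightarrow> nat \<Rightarrow> real)) set" where
  "feas2 m n = row_assign m m \<times> col_assign n n"

definition f2 :: "nat \<Rightarrow> nat \<Rightarrow> (nat \<Rightarrow> nat \<Rightarrow> nat \<Rightarrow> nat \<Rightarrow> real) \<Rightarrow>
    (nat \<Rightarrow> nat \<Rightarrow> real) \<Rightarrow> (nat \<Rightarrow> nat \<Rightarrow> real) \<Rightarrow>
    (nat \<Rightarrow> nat \<Rightarrow> real) \<Rightarrow> (nat \<Rightarrow> nat \<Rightarrow> real) \<Rightarrow> real" where
  "f2 m n Q c d x y =
     (\<Sum>i=1..m. \<Sum>j=1..m. \<Sum>k=1..n. \<Sum>l=1..n. Q i j k l * x i j * y k l)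
     + (\<Sum>i=1..m. \<Sum>j=1..m. c i j * x i j)
     + (\<Sum>i=1..n. \<Sum>j=1..n. d i j * y i j)"

definition A2 :: "nat \<Rightarrow> nat \<Rightarrow> (nat \<Rightarrow> nat \<Rightarrow> nat \<Rightarrow> nat \<Rightarrow> real) \<Rightarrow>
    (nat \<Rightarrow> nat \<Rightarrow> real) \<Rightarrow> (nat \<Rightarrow> nat \<Rightarrow> real) \<Rightarrow> real" where
  "A2 m n Q c d = (\<Sum>(x, y)\<in>feas2 m n. f2 m n Q c d x y) / real (card (feas2 m n))"

end

theory Submission
  imports Defs "HOL-Combinatorics.Transposition"
begin

text \<open>Both objectives are affine in \<open>x\<close> for fixed \<open>y\<close> and vice versa, so summing over a product of
  two families of matrices only involves the entrywise sums of each family. Permuting columns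
  (rows) is a symmetry of the row (column) assignments, hence every entry of a feasible \<open>x\<close>
  has mean \<open>1/q\<close> and every entry of a feasible \<open>y\<close> mean \<open>1/p\<close>. The families
  \<open>x\<^sup>a\<close> and \<open>y\<^sup>b\<close> have the same entrywise means, so the objective has the same average over
  them as over all feasible solutions, and an average lies between minimum and maximum.\<close>

definition bqap_obj :: "nat \<Rightarrow> nat \<Rightarrow> nat \<Rightarrow> nat \<Rightarrow> (nat \<Rightarrow> nat \<Rightarrow> nat \<Rightarrow> nat \<Rightarrow> real) \<Rightarrow>
    (nat \<Rightarrow> nat \<Rightarrow> real) \<Rightarrow> (nat \<Rightarrow> nat \<Rightarrow> real) \<Rightarrow>
    (nat \<Rightarrow> nat \<Rightarrow> real) \<Rightarrow> (nat \<Rightarrow> nat \<Rightarrow> real) \<Rightarrow> real" where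
  "bqap_obj p q r s Q c d x y =
     (\<Sum>i=1..p. \<Sum>j=1..q. \<Sum>k=1..r. \<Sum>l=1..s. Q i j k l * x i j * y k l)
     + (\<Sum>i=1..p. \<Sum>j=1..q. c i j * x i j)
     + (\<Sum>k=1..r. \<Sum>l=1..s. d k l * y k l)"

lemma f1_eq_bqap_obj: "f1 m n Q c d x y = bqap_obj m n m n Q c d x y"
  by (simp add: f1_def bqap_obj_def)

lemma f2_eq_bqap_obj: "f2 m n Q c d x y = bqap_obj m m n n Q c d x y"
  by (simp add: f2_def bqap_obj_def)

lemma sum_linear_form_product:
  fixes X :: "'u \<Rightarrow> nat \<Rightarrow> nat \<Rightarrow> real"
  assumes "\<And>i j. i \<in> {1..p} \<Longrightarrow> j \<in> {1..q} \<Longrightarrow> (\<Sum>u\<in>U. X u i j) = real (card U) * \<alpha>"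
  shows "(\<Sum>u\<in>U. \<Sum>i=1..p. \<Sum>j=1..q. c i j * X u i j) = real (card U) * (\<Sum>i=1..p. \<Sum>j=1..q. c i j * \<alpha>)"
proof -
  have "(\<Sum>u\<in>U. \<Sum>i=1..p. \<Sum>j=1..q. c i j * X u i j) = (\<Sum>i=1..p. \<Sum>j=1..q. c i j * (\<Sum>u\<in>U. X u i j))"
    by (simp only: sum.swap[of _ U] sum_distrib_left)
  then show ?thesis
    by (simp add: assms sum_distrib_left mult_ac)
qed

lemma sum_bqap_obj_product:
  fixes X :: "'u \<Rightarrow> nat \<Rightarrow> nat \<Rightarrow> real" and Y :: "'v \<Rightarrow> nat \<Rightarrow> nat \<Rightarrow> real"
  assumes X: "\<And>i j. i \<in> {1..p} \<Longrightarrow> j \<in> {1..q} \<Longrightarrow> (\<Sum>u\<in>U. X u i j) = real (card U) * \<alpha>"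
    and Y: "\<And>k l. k \<in> {1..r} \<Longrightarrow> l \<in> {1..s} \<Longrightarrow> (\<Sum>v\<in>V. Y v k l) = real (card V) * \<beta>"
  shows "(\<Sum>(u, v)\<in>U \<times> V. bqap_obj p q r s Q c d (X u) (Y v))
    = real (card U) * real (card V) * bqap_obj p q r s Q c d (\<lambda>_ _. \<alpha>) (\<lambda>_ _. \<beta>)"
proof -
  have "(\<Sum>u\<in>U. \<Sum>v\<in>V. \<Sum>i=1..p. \<Sum>j=1..q. \<Sum>k=1..r. \<Sum>l=1..s. Q i j k l * X u i j * Y v k l)
      = (\<Sum>i=1..p. \<Sum>j=1..q. \<Sum>k=1..r. \<Sum>l=1..s. Q i j k l * (\<Sum>u\<in>U. X u i j) * (\<Sum>v\<in>V. Y v k l))"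
    (is "?quad = _")
  proof -
    have "(\<Sum>v\<in>V. \<Sum>i=1..p. \<Sum>j=1..q. \<Sum>k=1..r. \<Sum>l=1..s. Q i j k l * X u i j * Y v k l)
        = (\<Sum>i=1..p. \<Sum>j=1..q. \<Sum>k=1..r. \<Sum>l=1..s. Q i j k l * X u i j * (\<Sum>v\<in>V. Y v k l))" for u
      by (simp only: sum.swap[of _ V] sum_distrib_left)
    then show ?thesis
      by (simp only: sum.swap[of _ U] sum_distrib_left sum_distrib_right)
  qed
  also have "\<dots> = real (card U) * real (card V)
      * (\<Sum>i=1..p. \<Sum>j=1..q. \<Sum>k=1..r. \<Sum>l=1..s. Q i j k l * \<alpha> * \<beta>)"
    by (simp add: X Y sum_distrib_left mult_ac)
  finally have quad: "?quad = real (card U) * real (card V)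
      * (\<Sum>i=1..p. \<Sum>j=1..q. \<Sum>k=1..r. \<Sum>l=1..s. Q i j k l * \<alpha> * \<beta>)" .
  have lin_x: "(\<Sum>u\<in>U. \<Sum>i=1..p. \<Sum>j=1..q. c i j * X u i j)
      = real (card U) * (\<Sum>i=1..p. \<Sum>j=1..q. c i j * \<alpha>)"
    using X by (rule sum_linear_form_product)
  have lin_y: "(\<Sum>v\<in>V. \<Sum>k=1..r. \<Sum>l=1..s. d k l * Y v k l)
      = real (card V) * (\<Sum>k=1..r. \<Sum>l=1..s. d k l * \<beta>)"
    using Y by (rule sum_linear_form_product)
  have "(\<Sum>(u, v)\<in>U \<times> V. bqap_obj p q r s Q c d (X u) (Y v))
      = ?quad + real (card V) * (\<Sum>u\<in>U. \<Sum>i=1..p. \<Sum>j=1..q. c i j * X u i j)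
        + real (card U) * (\<Sum>v\<in>V. \<Sum>k=1..r. \<Sum>l=1..s. d k l * Y v k l)"
    by (simp add: bqap_obj_def sum.cartesian_product' sum.distrib sum_distrib_left)
  also have "\<dots> = real (card U) * real (card V)
      * (\<Sum>i=1..p. \<Sum>j=1..q. \<Sum>k=1..r. \<Sum>l=1..s. Q i j k l * \<alpha> * \<beta>)
      + real (card V) * (real (card U) * (\<Sum>i=1..p. \<Sum>j=1..q. c i j * \<alpha>))
      + real (card U) * (real (card V) * (\<Sum>k=1..r. \<Sum>l=1..s. d k l * \<beta>))"
    by (simp only: quad lin_x lin_y)
  finally show ?thesis
    by (simp add: bqap_obj_def algebra_simps)
qed

lemma finite_zero_one_mat: "finite {x. zero_one_mat p q x}"
proof -
  let ?rows = "{r :: nat \<Rightarrow> real. \<forall>j. (j \<in> {1..q} \<longrightarrow> r j \<in> {0, 1}) \<and> (j \<notin> {1..q} \<longrightarrow> r j = 0)}"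
  have "finite ?rows"
    by (rule finite_set_of_finite_funs) auto
  then have "finite {x. \<forall>i. (i \<in> {1..p} \<longrightarrow> x i \<in> ?rows) \<and> (i \<notin> {1..p} \<longrightarrow> x i = (\<lambda>_. 0))}"
    by (intro finite_set_of_finite_funs) auto
  then show ?thesis
    by (rule finite_subset[rotated]) (auto simp: zero_one_mat_def fun_eq_iff)
qed

lemma finite_row_assign: "finite (row_assign p q)"
  unfolding row_assign_def by (rule finite_subset[OF _ finite_zero_one_mat]) auto

lemma row_assign_swap_columns:
  assumes a: "a \<in> {1..q}" and b: "b \<in> {1..q}" and x: "x \<in> row_assign p q"
  shows "(\<lambda>i j. x i (Transposition.transpose a b j)) \<in> row_assign p q"
proof -
  have in_range: "Transposition.transpose a b j \<in> {1..q} \<longleftrightarrow> j \<in> {1..q}" for j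
    using a b by (auto simp: transpose_def)
  have "(\<Sum>j=1..q. x i (Transposition.transpose a b j)) = (\<Sum>j=1..q. x i j)" for i
    using sum.reindex[OF inj_on_transpose, of "x i" a b "{1..q}"] a b by simp
  moreover have "zero_one_mat p q (\<lambda>i j. x i (Transposition.transpose a b j))"
    unfolding zero_one_mat_def
  proof (intro conjI allI impI)
    fix i j
    show "x i (Transposition.transpose a b j) \<in> {0, 1}"
      using x by (simp add: row_assign_def zero_one_mat_def)
  next
    fix i j
    assume "\<not> (i \<in> {1..p} \<and> j \<in> {1..q})"
    then show "x i (Transposition.transpose a b j) = 0"
      using x in_range[of j] unfolding row_assign_def zero_one_mat_def by blast
  qed
  ultimately show ?thesis
    using x by (simp add: row_assign_def)
qed

lemma row_assign_entry_sum_swap: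
  assumes "a \<in> {1..q}" and "b \<in> {1..q}"
  shows "(\<Sum>x\<in>row_assign p q. x i a) = (\<Sum>x\<in>row_assign p q. x i b)"
  using assms
  by (intro sum.reindex_bij_witness[where i="\<lambda>x i j. x i (Transposition.transpose a b j)"
        and j="\<lambda>x i j. x i (Transposition.transpose a b j)"])
    (auto intro: row_assign_swap_columns)

lemma row_assign_entry_mean:
  assumes i: "i \<in> {1..p}" and j: "j \<in> {1..q}"
  shows "(\<Sum>x\<in>row_assign p q. x i j) = real (card (row_assign p q)) / real q"
proof -
  have "real (card (row_assign p q)) = (\<Sum>x\<in>row_assign p q. \<Sum>k=1..q. x i k)"
    using i by (simp add: row_assign_def)
  also have "\<dots> = (\<Sum>k=1..q. \<Sum>x\<in>row_assign p q. x i k)"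
    by (rule sum.swap)
  also have "\<dots> = real q * (\<Sum>x\<in>row_assign p q. x i j)"
    using row_assign_entry_sum_swap[OF _ j] by simp
  finally show ?thesis
    using j by simp
qed

definition mat_transpose :: "('a \<Rightarrow> 'a \<Rightarrow> 'b) \<Rightarrow> 'a \<Rightarrow> 'a \<Rightarrow> 'b" where
  "mat_transpose x = (\<lambda>i j. x j i)"

lemma mat_transpose_involutory [simp]: "mat_transpose (mat_transpose x) = x"
  by (simp add: mat_transpose_def)

lemma inj_mat_transpose: "inj mat_transpose"
  by (metis injI mat_transpose_involutory)

lemma col_assign_eq_transpose_image: "col_assign p q = mat_transpose ` row_assign q p"
proof -
  have iff: "mat_transpose y \<in> row_assign q p \<longleftrightarrow> y \<in> col_assign p q" for y
    by (auto simp: row_assign_def col_assign_def zero_one_mat_def mat_transpose_def)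
  show ?thesis
  proof (intro set_eqI iffI)
    fix y
    assume "y \<in> col_assign p q"
    then show "y \<in> mat_transpose ` row_assign q p"
      using iff[of y] by (intro image_eqI[of y _ "mat_transpose y"]) simp_all
  next
    fix y
    assume "y \<in> mat_transpose ` row_assign q p"
    then show "y \<in> col_assign p q"
      by (auto simp flip: iff)
  qed
qed

lemma finite_col_assign: "finite (col_assign p q)"
  by (simp add: col_assign_eq_transpose_image finite_row_assign)

lemma col_assign_entry_mean:
  assumes "k \<in> {1..p}" and "l \<in> {1..q}"
  shows "(\<Sum>y\<in>col_assign p q. y k l) = real (card (col_assign p q)) / real p"
proof -
  have inj: "inj_on mat_transpose (row_assign q p)"
    using inj_mat_transpose by (rule inj_on_subset) simp
  have "(\<Sum>y\<in>col_assign p q. y k l) = (\<Sum>x\<in>row_assign q p. mat_transpose x k l)"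
    by (simp add: col_assign_eq_transpose_image sum.reindex[OF inj])
  also have "\<dots> = real (card (row_assign q p)) / real p"
    using row_assign_entry_mean[OF assms(2,1)] by (simp add: mat_transpose_def)
  finally show ?thesis
    by (simp add: col_assign_eq_transpose_image card_image[OF inj])
qed

lemma xmat_in_row_assign:
  assumes "a \<in> {1..q}"
  shows "xmat p q a \<in> row_assign p q"
proof -
  have "zero_one_mat p q (xmat p q a)"
    by (simp add: zero_one_mat_def xmat_def)
  moreover have "(\<Sum>j=1..q. xmat p q a i j) = 1" if "i \<in> {1..p}" for i
    using assms that by (simp add: xmat_def sum.delta')
  ultimately show ?thesis
    by (simp add: row_assign_def)
qed

lemma ymat_eq_transpose_xmat: "ymat p q b = mat_transpose (xmat q p b)"
  by (auto simp: ymat_def xmat_def mat_transpose_def fun_eq_iff)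

lemma ymat_in_col_assign:
  assumes "b \<in> {1..p}"
  shows "ymat p q b \<in> col_assign p q"
  using xmat_in_row_assign[OF assms]
  by (simp add: col_assign_eq_transpose_image ymat_eq_transpose_xmat)

lemma xmat_entry_sum:
  assumes "i \<in> {1..p}" and "j \<in> {1..q}"
  shows "(\<Sum>a=1..q. xmat p q a i j) = 1"
  using assms by (simp add: xmat_def)

lemma ymat_entry_sum:
  assumes "k \<in> {1..p}" and "l \<in> {1..q}"
  shows "(\<Sum>b=1..p. ymat p q b k l) = 1"
  using xmat_entry_sum[OF assms(2,1)] by (simp add: ymat_eq_transpose_xmat mat_transpose_def)

lemma Min_le_mean_le_Max:
  fixes g :: "'a \<Rightarrow> real"
  assumes "finite S" and "S \<noteq> {}" and "sum g S = real (card S) * \<mu>"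
  shows "Min (g ` S) \<le> \<mu> \<and> \<mu> \<le> Max (g ` S)"
proof -
  have card: "real (card S) > 0"
    using assms(1,2) by (simp add: card_gt_0_iff)
  have "real (card S) * Min (g ` S) \<le> real (card S) * \<mu>"
    using sum_bounded_below[of S "Min (g ` S)" g] assms by simp
  moreover have "real (card S) * \<mu> \<le> real (card S) * Max (g ` S)"
    using sum_bounded_above[of S g "Max (g ` S)"] assms by simp
  ultimately show ?thesis
    using card by simp
qed

lemma bqap_obj_mean_between_Min_Max:
  assumes q: "q \<ge> 1" and r: "r \<ge> 1"
  shows "Min ((\<lambda>(a, b). bqap_obj p q r s Q c d (xmat p q a) (ymat r s b)) ` ({1..q} \<times> {1..r}))
           \<le> (\<Sum>(x, y)\<in>row_assign p q \<times> col_assign r s. bqap_obj p q r s Q c d x y)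
             / real (card (row_assign p q \<times> col_assign r s))
       \<and> (\<Sum>(x, y)\<in>row_assign p q \<times> col_assign r s. bqap_obj p q r s Q c d x y)
             / real (card (row_assign p q \<times> col_assign r s))
           \<le> Max ((\<lambda>(a, b). bqap_obj p q r s Q c d (xmat p q a) (ymat r s b)) ` ({1..q} \<times> {1..r}))"
proof -
  let ?mean = "bqap_obj p q r s Q c d (\<lambda>_ _. 1 / real q) (\<lambda>_ _. 1 / real r)"
  let ?feasible = "row_assign p q \<times> col_assign r s"
  have "(\<Sum>(x, y)\<in>?feasible. bqap_obj p q r s Q c d x y)
      = real (card (row_assign p q)) * real (card (col_assign r s)) * ?mean"
    by (rule sum_bqap_obj_product[where X="\<lambda>x. x" and Y="\<lambda>y. y"])
      (simp_all add: row_assign_entry_mean col_assign_entry_mean)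
  moreover have "row_assign p q \<noteq> {}" and "col_assign r s \<noteq> {}"
    using xmat_in_row_assign[of 1 q p] ymat_in_col_assign[of 1 r s] q r by auto
  ultimately have feasible_mean: "(\<Sum>(x, y)\<in>?feasible. bqap_obj p q r s Q c d x y)
      / real (card ?feasible) = ?mean"
    by (simp add: card_cartesian_product finite_row_assign finite_col_assign)
  have "(\<Sum>a\<in>{1..q}. xmat p q a i j) = real (card {1..q}) * (1 / real q)"
    if "i \<in> {1..p}" and "j \<in> {1..q}" for i j
    using xmat_entry_sum[OF that] q by simp
  moreover have "(\<Sum>b\<in>{1..r}. ymat r s b k l) = real (card {1..r}) * (1 / real r)"
    if "k \<in> {1..r}" and "l \<in> {1..s}" for k l
    using ymat_entry_sum[OF that] r by simp
  ultimately have "(\<Sum>(a, b)\<in>{1..q} \<times> {1..r}. bqap_obj p q r s Q c d (xmat p q a) (ymat r s b))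
      = real (card ({1..q} \<times> {1..r})) * ?mean"
    unfolding card_cartesian_product of_nat_mult by (rule sum_bqap_obj_product)
  from Min_le_mean_le_Max[OF _ _ this] q r show ?thesis
    unfolding feasible_mean by simp
qed

theorem corollary1:
  fixes m n :: nat
    and Q Q' :: "nat \<Rightarrow> nat \<Rightarrow> nat \<Rightarrow> nat \<Rightarrow> real"
    and c d c' d' :: "nat \<Rightarrow> nat \<Rightarrow> real"
  assumes "m \<ge> 1" and "n \<ge> 1"
  shows "Min ((\<lambda>(a, b). f1 m n Q c d (xmat m n a) (ymat m n b)) ` ({1..n} \<times> {1..m}))
           \<le> A1 m n Q c d
       \<and> A1 m n Q c d
           \<le> Max ((\<lambda>(a, b). f1 m n Q c d (xmat m n a) (ymat m n b)) ` ({1..n} \<times> {1..m}))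
       \<and> Min ((\<lambda>(a, b). f2 m n Q' c' d' (xmat m m a) (ymat n n b)) ` ({1..m} \<times> {1..n}))
           \<le> A2 m n Q' c' d'
       \<and> A2 m n Q' c' d'
           \<le> Max ((\<lambda>(a, b). f2 m n Q' c' d' (xmat m m a) (ymat n n b)) ` ({1..m} \<times> {1..n}))"
  using bqap_obj_mean_between_Min_Max[where p=m and q=n and r=m and s=n and Q=Q and c=c and d=d]
    bqap_obj_mean_between_Min_Max[where p=m and q=m and r=n and s=n and Q=Q' and c=c' and d=d']
    assms
  by (simp add: A1_def A2_def feas1_def feas2_def f1_eq_bqap_obj f2_eq_bqap_obj)

end
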